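(* Let $G$ be a non-empty bipartite graph with parts $X$ and $Y$. Let $X_0=\{x\in X: d(x)=|Y|\}$, $X_1=X\setminus X_0$, $Y_0=\{y\in Y: d(y)=|X|\}$ and $Y_1=Y\setminus Y_0$. Suppose that (i) $|X|>|Y|$, and (ii) either $X_1=Y_1=\emptyset$, or $|X_0|/|Y_1|>2|X_1|/|Y_0|$. Then $G$ contains a collection of at most $\left\lceil \frac{|X|}{|Y|+1}\right\rceil$ paths which together cover all vertices of $G$.
   Context: $d(v)$ denotes the degree of $v$ in $G$. Paths may have length zero (a single vertex) and need not be vertex-disjoint. *)

theory Defs
  imports Complex_Main
begin

definition bipartite_graph :: "'a set \<Rightarrow> 'a set \<Rightarrow> ('a \<Rightarrow> 'a \<Rightarrow> bool) \<Rightarrow> bool" where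
  "bipartite_graph X Y E \<longleftrightarrow>
     finite X \<and> finite Y \<and> X \<inter> Y = {} \<and>
     (\<forall>u v. E u v \<longrightarrow> E v u) \<and>
     (\<forall>u v. E u v \<longrightarrow> (u \<in> X \<and> v \<in> Y) \<or> (u \<in> Y \<and> v \<in> X))"

definition deg :: "('a \<Rightarrow> 'a \<Rightarrow> bool) \<Rightarrow> 'a \<Rightarrow> nat" where
  "deg E v = card {u. E v u}"

definition is_path :: "'a set \<Rightarrow> ('a \<Rightarrow> 'a \<Rightarrow> bool) \<Rightarrow> 'a list \<Rightarrow> bool" where
  "is_path V E p \<longleftrightarrow> p \<noteq> [] \<and> distinct p \<and> set p \<subseteq> V \<and>
     (\<forall>i. Suc i < length p \<longrightarrow> E (p ! i) (p ! Suc i))"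

end

theory Submission
  imports Defs
begin

text \<open>
  List Y with the vertices of Y0 first, as w_0, ..., w_{m-1}. A list x_0, ..., x_r of distinct
  vertices of X with r \<le> m becomes the path x_0 w_0 x_1 w_1 ... w_{r-1} x_r, and all its edges are
  present as long as x_j \<in> X0 whenever j \<ge> |Y0|: every vertex of Y0 sees all of X, and every
  vertex of X0 sees all of Y. It therefore suffices to split X into k = \<lceil>|X| / (|Y| + 1)\<rceil> such
  lists ("rows"), one of them of full length |Y| + 1 so that its path also covers Y. Filling the
  rows greedily, each taking up to |Y0| vertices of X1 first and then vertices of X0, works
  because the density hypothesis yields |X1| \<le> k |Y0| and |X0| + min |Y0| |X1| \<ge> |Y| + 1.
\<close>

text \<open>The second equation yields the last vertex; on lists with
  length xs > Suc (length ws) the value is junk.\<close>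

fun interleave :: "'a list \<Rightarrow> 'a list \<Rightarrow> 'a list" where
  "interleave (x # y # xs) (w # ws) = x # w # interleave (y # xs) ws"
| "interleave xs ws = take 1 xs"

lemma interleave_ConsE:
  obtains p where "interleave (x # xs) ws = x # p"
  by (cases "(x # xs, ws)" rule: interleave.cases) auto

lemma set_interleave:
  "length xs \<le> Suc (length ws) \<Longrightarrow> set (interleave xs ws) = set xs \<union> set (take (length xs - 1) ws)"
  by (induction xs ws rule: interleave.induct) auto

lemma is_path_Cons_Cons:
  "is_path V E (u # v # p) \<longleftrightarrow> u \<in> V \<and> u \<notin> set (v # p) \<and> E u v \<and> is_path V E (v # p)"
proof -
  have "(\<forall>i. Suc i < length (u # v # p) \<longrightarrow> E ((u # v # p) ! i) ((u # v # p) ! Suc i)) \<longleftrightarrow>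
        E u v \<and> (\<forall>i. Suc i < length (v # p) \<longrightarrow> E ((v # p) ! i) ((v # p) ! Suc i))"
    (is "?all (u # v # p) \<longleftrightarrow> _")
  proof
    assume all: "?all (u # v # p)"
    show "E u v \<and> ?all (v # p)"
      using spec[OF all, of 0] spec[OF all, of "Suc i" for i] by auto
  next
    assume "E u v \<and> ?all (v # p)"
    then show "?all (u # v # p)"
      by (auto simp: nth_Cons split: nat.split)
  qed
  then show ?thesis
    unfolding is_path_def by auto
qed

lemma is_path_interleave:
  assumes "distinct xs" "distinct ws" "set xs \<inter> set ws = {}" "set xs \<union> set ws \<subseteq> V"
    and "xs \<noteq> []" "length xs \<le> Suc (length ws)"
    and "\<And>j. Suc j < length xs \<Longrightarrow> E (xs ! j) (ws ! j) \<and> E (ws ! j) (xs ! Suc j)"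
  shows "is_path V E (interleave xs ws)"
  using assms
proof (induction xs ws rule: interleave.induct)
  case (1 x y xs w ws)
  have "E ((y # xs) ! j) (ws ! j) \<and> E (ws ! j) ((y # xs) ! Suc j)" if "Suc j < length (y # xs)" for j
    using "1.prems"(7)[of "Suc j"] that by simp
  then have "is_path V E (interleave (y # xs) ws)"
    using "1.prems"(1-6) by (intro "1.IH") auto
  moreover have "E x w" "E w y"
    using "1.prems"(7)[of 0] by auto
  moreover have "x \<notin> set (interleave (y # xs) ws)" "w \<notin> set (interleave (y # xs) ws)" "x \<noteq> w"
    using "1.prems"(1-3,6) by (auto simp: set_interleave dest: in_set_takeD)
  moreover obtain p where "interleave (y # xs) ws = y # p"
    by (rule interleave_ConsE)
  ultimately show ?case
    using "1.prems"(4) by (simp add: is_path_Cons_Cons)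
qed (auto simp: is_path_def)

lemma obtain_distinct_list_length_min:
  assumes "finite S"
  obtains xs where "distinct xs" "set xs \<subseteq> S" "length xs = min n (card S)"
proof -
  obtain ys where "distinct ys" "set ys = S"
    using assms finite_distinct_list by blast
  then show ?thesis
    using distinct_card[of ys] by (intro that[of "take n ys"]) (auto dest: in_set_takeD)
qed

lemma card_Diff_distinct_list:
  "finite S \<Longrightarrow> distinct xs \<Longrightarrow> set xs \<subseteq> S \<Longrightarrow> card (S - set xs) = card S - length xs"
  by (simp add: card_Diff_subset distinct_card)

lemma obtain_list_subset_first:
  assumes "finite Y" "Y0 \<subseteq> Y"
  obtains ws where "distinct ws" "set ws = Y" "length ws = card Y" "\<forall>j<card Y0. ws ! j \<in> Y0"
proof -
  obtain w0 w1 where w0: "distinct w0" "set w0 = Y0" and w1: "distinct w1" "set w1 = Y - Y0"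
    using assms finite_distinct_list by (metis finite_Diff finite_subset)
  have distinct: "distinct (w0 @ w1)" and set: "set (w0 @ w1) = Y"
    using w0 w1 assms(2) by auto
  moreover have "length (w0 @ w1) = card Y"
    using distinct_card[OF distinct] set by simp
  moreover have "\<forall>j<card Y0. (w0 @ w1) ! j \<in> Y0"
    using w0 distinct_card[of w0] by (auto simp: nth_append)
  ultimately show ?thesis
    by (rule that)
qed

lemma greedy_row_bounds:
  fixes a b c m j :: nat
  assumes "c \<le> m" "b \<le> Suc j * c" "a + b \<le> Suc j * Suc m"
  shows "b - min c b \<le> j * c" "a - min (Suc m - min c b) a + (b - min c b) \<le> j * Suc m"
proof -
  show B: "b - min c b \<le> j * c"
    using assms(2) by (cases "c \<le> b") (simp_all add: min_def)
  show "a - min (Suc m - min c b) a + (b - min c b) \<le> j * Suc m"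
  proof (cases "a \<le> Suc m - min c b")
    case True
    have "j * c \<le> j * Suc m"
      using \<open>c \<le> m\<close> by (intro mult_le_mono2) simp
    then show ?thesis
      using B True by simp
  next
    case False
    then show ?thesis
      using assms(1,3) by (simp add: min_def split: if_splits)
  qed
qed

lemma ex_cover_by_rows:
  fixes A B :: "'a set" and c m j :: nat
  assumes "finite A" "finite B" "A \<inter> B = {}" "c \<le> m"
    and "card B \<le> j * c" "card A + card B \<le> j * Suc m"
  shows "\<exists>L. finite L \<and> card L \<le> j \<and> (\<Union>l\<in>L. set l) = A \<union> B \<and>
    (\<forall>l\<in>L. distinct l \<and> length l \<le> Suc m \<and> set (drop c l) \<subseteq> A) \<and>
    (Suc m \<le> card A + min c (card B) \<longrightarrow> (\<exists>l\<in>L. length l = Suc m))"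
  using assms
proof (induction j arbitrary: A B)
  case 0
  then have "A \<union> B = {}"
    by simp
  then show ?case
    by (intro exI[of _ "{}"]) auto
next
  case (Suc j)
  obtain tb where tb: "distinct tb" "set tb \<subseteq> B" "length tb = min c (card B)"
    using Suc.prems(2) by (rule obtain_distinct_list_length_min)
  obtain ta where ta: "distinct ta" "set ta \<subseteq> A" "length ta = min (Suc m - length tb) (card A)"
    using Suc.prems(1) by (rule obtain_distinct_list_length_min)
  define l where "l = tb @ ta"
  have "drop c l = drop (c - length tb) ta"
    using tb(3) by (simp add: l_def)
  then have l_row: "distinct l \<and> length l \<le> Suc m \<and> set (drop c l) \<subseteq> A"
    using tb ta Suc.prems(3,4) by (auto simp: l_def dest: in_set_dropD)
  have rest: "finite (A - set ta)" "finite (B - set tb)" "(A - set ta) \<inter> (B - set tb) = {}"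
    using Suc.prems(1-3) by auto
  have "card (B - set tb) \<le> j * c" "card (A - set ta) + card (B - set tb) \<le> j * Suc m"
    using greedy_row_bounds[OF \<open>c \<le> m\<close> Suc.prems(5,6)] tb ta Suc.prems(1,2)
    by (simp_all add: card_Diff_distinct_list)
  from Suc.IH[OF rest \<open>c \<le> m\<close> this]
  obtain L where L: "finite L" "card L \<le> j" "(\<Union>l\<in>L. set l) = (A - set ta) \<union> (B - set tb)"
      "\<forall>l\<in>L. distinct l \<and> length l \<le> Suc m \<and> set (drop c l) \<subseteq> A - set ta"
    by (elim exE conjE) (rule that)
  have "finite (insert l L)"
    using L(1) by simp
  moreover have "card (insert l L) \<le> Suc j"
    using L(1,2) by (simp add: card_insert_if)
  moreover have "(\<Union>l\<in>insert l L. set l) = A \<union> B"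
    using L(3) tb(2) ta(2) by (auto simp: l_def)
  moreover have "\<forall>l\<in>insert l L. distinct l \<and> length l \<le> Suc m \<and> set (drop c l) \<subseteq> A"
    using L(4) l_row by blast
  moreover have "Suc m \<le> card A + min c (card B) \<longrightarrow> (\<exists>l\<in>insert l L. length l = Suc m)"
    using tb(3) ta(3) \<open>c \<le> m\<close> by (auto simp: l_def)
  ultimately show ?case
    by (intro exI[of _ "insert l L"] conjI)
qed

lemma bipartite_graph_commute: "bipartite_graph X Y E \<Longrightarrow> bipartite_graph Y X E"
  by (auto simp: bipartite_graph_def)

lemma deg_eq_card_iff:
  assumes "bipartite_graph X Y E" "x \<in> X"
  shows "deg E x = card Y \<longleftrightarrow> (\<forall>y\<in>Y. E x y)"
proof -
  have nbhd: "{u. E x u} \<subseteq> Y" and "finite Y"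
    using assms unfolding bipartite_graph_def by blast+
  then have "deg E x = card Y \<longleftrightarrow> {u. E x u} = Y"
    unfolding deg_def using card_subset_eq by blast
  then show ?thesis
    using nbhd by auto
qed

lemma is_path_interleave_row:
  assumes G: "bipartite_graph X Y E"
    and adj_X0: "\<forall>x\<in>X0. \<forall>y\<in>Y. E x y" and adj_Y0: "\<forall>x\<in>X. \<forall>y\<in>Y0. E x y"
    and ws: "distinct ws" "set ws = Y" "length ws = card Y" "\<forall>j<card Y0. ws ! j \<in> Y0"
    and l: "distinct l" "set l \<subseteq> X" "l \<noteq> []" "length l \<le> Suc (card Y)" "set (drop (card Y0) l) \<subseteq> X0"
  shows "is_path (X \<union> Y) E (interleave l ws)"
proof (rule is_path_interleave)
  have XY: "X \<inter> Y = {}" and E_sym: "\<And>u v. E u v \<Longrightarrow> E v u"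
    using G unfolding bipartite_graph_def by blast+
  then show "set l \<inter> set ws = {}" "set l \<union> set ws \<subseteq> X \<union> Y"
    using l(2) ws(2) by blast+
  fix j assume j: "Suc j < length l"
  have "l ! j \<in> set l" "l ! Suc j \<in> set l"
    using j by simp_all
  then have "l ! j \<in> X" "l ! Suc j \<in> X"
    using l(2) by blast+
  have "j < length ws"
    using j l(4) ws(3) by simp
  then have "ws ! j \<in> Y"
    using ws(2) nth_mem[of j ws] by blast
  show "E (l ! j) (ws ! j) \<and> E (ws ! j) (l ! Suc j)"
  proof (cases "j < card Y0")
    case True
    then show ?thesis
      using adj_Y0 ws(4) E_sym \<open>l ! j \<in> X\<close> \<open>l ! Suc j \<in> X\<close> by blast
  next
    case False
    have "l ! i \<in> X0" if "card Y0 \<le> i" "i < length l" for i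
    proof -
      have "l ! i = drop (card Y0) l ! (i - card Y0)" and idx: "i - card Y0 < length (drop (card Y0) l)"
        using that by simp_all
      then show ?thesis
        using l(5) nth_mem[OF idx] by auto
    qed
    then have "l ! j \<in> X0" "l ! Suc j \<in> X0"
      using False j by simp_all
    then show ?thesis
      using adj_X0 E_sym \<open>ws ! j \<in> Y\<close> by blast
  qed
qed (use l ws in auto)

lemma path_cover_from_rows:
  assumes G: "bipartite_graph X Y E" and "Y0 \<subseteq> Y"
    and adj_X0: "\<forall>x\<in>X0. \<forall>y\<in>Y. E x y" and adj_Y0: "\<forall>x\<in>X. \<forall>y\<in>Y0. E x y"
    and L: "finite L" "(\<Union>l\<in>L. set l) = X"
    and rows: "\<forall>l\<in>L. distinct l \<and> length l \<le> Suc (card Y) \<and> set (drop (card Y0) l) \<subseteq> X0"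
    and full_row: "\<exists>l\<in>L. length l = Suc (card Y)"
  shows "\<exists>P. finite P \<and> card P \<le> card L \<and> (\<forall>p\<in>P. is_path (X \<union> Y) E p) \<and> (\<Union>p\<in>P. set p) = X \<union> Y"
proof -
  have "finite Y"
    using G unfolding bipartite_graph_def by blast
  then obtain ws where ws: "distinct ws" "set ws = Y" "length ws = card Y" "\<forall>j<card Y0. ws ! j \<in> Y0"
    using \<open>Y0 \<subseteq> Y\<close> by (rule obtain_list_subset_first)
  define P where "P = (\<lambda>l. interleave l ws) ` (L - {[]})"
  have set_P: "set (interleave l ws) = set l \<union> set (take (length l - 1) ws)" if "l \<in> L" for l
    using that rows ws(3) by (intro set_interleave) auto
  have "\<forall>p\<in>P. is_path (X \<union> Y) E p"
    using is_path_interleave_row[OF G adj_X0 adj_Y0 ws] rows L(2) by (auto simp: P_def)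
  moreover have "(\<Union>p\<in>P. set p) = X \<union> Y"
  proof (intro equalityI Un_least)
    show "(\<Union>p\<in>P. set p) \<subseteq> X \<union> Y"
      using set_P L(2) ws(2) by (auto simp: P_def dest: in_set_takeD)
    show "X \<subseteq> (\<Union>p\<in>P. set p)"
    using L(2) set_P by (auto simp: P_def)
    obtain l where "l \<in> L" "length l = Suc (card Y)"
      using full_row by blast
    then have "Y \<subseteq> set (interleave l ws)" "l \<noteq> []"
      using set_P ws(2,3) by auto
    then show "Y \<subseteq> (\<Union>p\<in>P. set p)"
      using \<open>l \<in> L\<close> by (auto simp: P_def)
  qed
  moreover have "card P \<le> card L"
  proof -
    have "card P \<le> card (L - {[]})"
      unfolding P_def using L(1) by (intro card_image_le) simp
    also have "\<dots> \<le> card L"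
      using L(1) by (intro card_mono) auto
    finally show ?thesis .
  qed
  moreover have "finite P"
    using L(1) by (simp add: P_def)
  ultimately show ?thesis
    by (intro exI[of _ P] conjI)
qed

lemma density_imp_row_bounds:
  fixes a b c d k :: nat
  assumes "c + d < a + b" "a + b \<le> k * Suc (c + d)" "b = 0 \<or> (0 < d \<and> 2 * b * d < a * c)"
  shows "b \<le> k * c" "Suc (c + d) \<le> a + min c b"
proof -
  consider "b = 0" | "0 < d" "2 * b * d < a * c"
    using assms(3) by blast
  then have "b \<le> k * c \<and> Suc (c + d) \<le> a + min c b"
  proof cases
    case 1
    then show ?thesis
      using assms(1) by simp
  next
    case 2
    have "b \<le> b * d"
      using \<open>0 < d\<close> by simp
    then have "b * Suc d \<le> 2 * b * d"
      by simp
    then have "b * Suc d < a * c"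
      using 2(2) by linarith
    then have "b * Suc (c + d) < (a + b) * c"
      by (simp add: algebra_simps)
    also have "\<dots> \<le> k * Suc (c + d) * c"
      using assms(2) by (rule mult_right_mono) simp
    finally have "b * Suc (c + d) < (k * c) * Suc (c + d)"
      by (simp add: algebra_simps)
    then have "b \<le> k * c"
      using mult_less_cancel2 less_imp_le by blast
    moreover have "d < a" if "c \<le> b"
    proof (rule ccontr)
      assume "\<not> d < a"
      then have "a * c \<le> d * b"
        using that by (intro mult_le_mono) simp_all
      moreover have "d * b \<le> 2 * b * d"
        by simp
      ultimately show False
        using 2(2) by linarith
    qed
    ultimately show ?thesis
      using assms(1) by (auto simp: min_def)
  qed
  then show "b \<le> k * c" "Suc (c + d) \<le> a + min c b"
    by blast+
qed

lemma le_nat_ceiling_divide_mult: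
  fixes n m :: nat
  assumes "0 < m"
  shows "n \<le> nat \<lceil>real n / real m\<rceil> * m"
proof -
  have "real n = real n / real m * real m"
    using assms by simp
  also have "\<dots> \<le> of_int \<lceil>real n / real m\<rceil> * real m"
    by (intro mult_right_mono le_of_int_ceiling) simp
  also have "\<dots> = real (nat \<lceil>real n / real m\<rceil> * m)"
    by simp
  finally show ?thesis
    by (simp only: of_nat_le_iff)
qed

lemma bipartite_path_cover:
  assumes G: "bipartite_graph X Y E" and "X0 \<subseteq> X" "Y0 \<subseteq> Y"
    and adj_X0: "\<forall>x\<in>X0. \<forall>y\<in>Y. E x y" and adj_Y0: "\<forall>x\<in>X. \<forall>y\<in>Y0. E x y"
    and larger: "card Y < card X" and k_bound: "card X \<le> k * Suc (card Y)"
    and dense: "X - X0 = {} \<or> Y - Y0 \<noteq> {} \<and> 2 * card (X - X0) * card (Y - Y0) < card X0 * card Y0"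
  shows "\<exists>P. finite P \<and> card P \<le> k \<and> (\<forall>p\<in>P. is_path (X \<union> Y) E p) \<and> (\<Union>p\<in>P. set p) = X \<union> Y"
proof -
  have fin: "finite X" "finite Y"
    using G unfolding bipartite_graph_def by blast+
  have card_X: "card X = card X0 + card (X - X0)" and card_Y: "card Y = card Y0 + card (Y - Y0)"
    using fin \<open>X0 \<subseteq> X\<close> \<open>Y0 \<subseteq> Y\<close> by (simp_all add: card_Diff_subset card_mono finite_subset)
  have "card (X - X0) = 0 \<or> 0 < card (Y - Y0) \<and> 2 * card (X - X0) * card (Y - Y0) < card X0 * card Y0"
    using dense fin(2) by (metis card.empty card_gt_0_iff finite_Diff)
  with larger k_bound have bounds: "card (X - X0) \<le> k * card Y0"
      "Suc (card Y) \<le> card X0 + min (card Y0) (card (X - X0))"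
    using density_imp_row_bounds[of "card Y0" "card (Y - Y0)" "card X0" "card (X - X0)" k]
    unfolding card_X card_Y by simp_all
  have size: "card X0 + card (X - X0) \<le> k * Suc (card Y)"
    using k_bound unfolding card_X .
  have "finite X0" "finite (X - X0)" "X0 \<inter> (X - X0) = {}" "card Y0 \<le> card Y"
    using fin finite_subset[OF \<open>X0 \<subseteq> X\<close>] card_mono[OF _ \<open>Y0 \<subseteq> Y\<close>] by auto
  from ex_cover_by_rows[OF this bounds(1) size]
  obtain L where L: "finite L" "card L \<le> k" "(\<Union>l\<in>L. set l) = X0 \<union> (X - X0)"
    "\<forall>l\<in>L. distinct l \<and> length l \<le> Suc (card Y) \<and> set (drop (card Y0) l) \<subseteq> X0"
    "Suc (card Y) \<le> card X0 + min (card Y0) (card (X - X0)) \<longrightarrow> (\<exists>l\<in>L. length l = Suc (card Y))"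
    by (elim exE conjE) (rule that)
  have "(\<Union>l\<in>L. set l) = X"
    using L(3) Un_absorb1[OF \<open>X0 \<subseteq> X\<close>] by simp
  from path_cover_from_rows[OF G \<open>Y0 \<subseteq> Y\<close> adj_X0 adj_Y0 L(1) this L(4) mp[OF L(5) bounds(2)]]
  obtain P where "finite P" "card P \<le> card L" "\<forall>p\<in>P. is_path (X \<union> Y) E p" "(\<Union>p\<in>P. set p) = X \<union> Y"
    by (elim exE conjE) (rule that)
  with L(2) show ?thesis
    by (intro exI[of _ P] conjI) simp_all
qed

theorem lemma2p4:
  fixes X Y :: "'a set" and E :: "'a \<Rightarrow> 'a \<Rightarrow> bool"
  assumes G: "bipartite_graph X Y E"
    and nonempty: "X \<union> Y \<noteq> {}"
    and i: "card X > card Y"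
    and ii: "let X0 = {x \<in> X. deg E x = card Y}; X1 = X - X0;
                 Y0 = {y \<in> Y. deg E y = card X}; Y1 = Y - Y0
             in (X1 = {} \<and> Y1 = {}) \<or> card X0 * card Y0 > 2 * card X1 * card Y1"
  shows "\<exists>P. finite P \<and> card P \<le> nat \<lceil>real (card X) / real (card Y + 1)\<rceil> \<and>
             (\<forall>p \<in> P. is_path (X \<union> Y) E p) \<and> (\<Union>p \<in> P. set p) = X \<union> Y"
proof -
  define X0 where "X0 = {x \<in> X. deg E x = card Y}"
  define Y0 where "Y0 = {y \<in> Y. deg E y = card X}"
  have E_sym: "\<And>u v. E u v \<Longrightarrow> E v u"
    using G unfolding bipartite_graph_def by blast
  have adj_X0: "\<forall>x\<in>X0. \<forall>y\<in>Y. E x y"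
    using deg_eq_card_iff[OF G] by (auto simp: X0_def)
  have adj_Y0: "\<forall>x\<in>X. \<forall>y\<in>Y0. E x y"
    using deg_eq_card_iff[OF bipartite_graph_commute[OF G]] E_sym unfolding Y0_def by blast
  have "X - X0 = {}" if "Y - Y0 = {}"
    using that adj_Y0 deg_eq_card_iff[OF G] unfolding X0_def by blast
  then have dense: "X - X0 = {} \<or> Y - Y0 \<noteq> {} \<and> 2 * card (X - X0) * card (Y - Y0) < card X0 * card Y0"
    using ii unfolding Let_def X0_def[symmetric] Y0_def[symmetric] by blast
  have bound: "card X \<le> nat \<lceil>real (card X) / real (card Y + 1)\<rceil> * Suc (card Y)"
    using le_nat_ceiling_divide_mult[of "Suc (card Y)" "card X"] by simp
  have "X0 \<subseteq> X" "Y0 \<subseteq> Y"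
    by (auto simp: X0_def Y0_def)
  from bipartite_path_cover[OF G this adj_X0 adj_Y0 i bound dense] show ?thesis .
qed

end
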